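(* Let $\tilde w:\mathcal D^n(\delta)\to\mathcal D^n(\delta)$ and let $C\subset\mathcal D^n(\delta)$ be nonempty and bounded with $\tilde w(C)\subset C$. Then the minimal absorbing set $\mathcal M[\tilde w,C]$ exists, i.e. the intersection of all absorbing sets for $\tilde w$ in $C$ is itself an absorbing set for $\tilde w$ in $C$.
   Context: $\mathcal D^n(\delta)=\{\delta m:m\in\mathbb Z^n\}\subset\mathbb R^n$ for fixed $\delta>0$. For a map $\tilde w$ and nonempty $C$ with $\tilde w(C)\subset C$, a set $\Lambda\subset C$ is an absorbing set for $\tilde w$ in $C$ if for every $\tilde x\in C$ there is $N\in\mathbb N$ with $\tilde w^{\circ i}(\tilde x)\in\Lambda$ for all $i\ge N$ (absorbing sets are nonempty). When the intersection of all absorbing sets in $C$ is absorbing in $C$, it is called the minimal absorbing set $\mathcal M[\tilde w,C]$. *)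

theory Defs
  imports "HOL-Analysis.Analysis"
begin

text \<open>The lattice D^n(delta) = {delta m : m in Z^n} inside R^n.\<close>
definition grid :: "real \<Rightarrow> (real ^ 'n) set" where
  "grid \<delta> = {x. \<exists>m :: int ^ 'n. x = (\<chi> i. \<delta> * of_int (m $ i))}"

definition absorbing_set :: "('a \<Rightarrow> 'a) \<Rightarrow> 'a set \<Rightarrow> 'a set \<Rightarrow> bool" where
  "absorbing_set w C \<Lambda> \<longleftrightarrow> \<Lambda> \<noteq> {} \<and> \<Lambda> \<subseteq> C \<and>
     (\<forall>x\<in>C. \<exists>N::nat. \<forall>i\<ge>N. (w ^^ i) x \<in> \<Lambda>)"

end

theory Submission
  imports Defs
begin

text \<open>Distinct grid points differ by a nonzero integer multiple of \<open>\<delta>\<close> in some coordinate,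
  so the grid is uniformly discrete and each of its bounded subsets is finite. On a finite \<open>C\<close> there are only
  finitely many absorbing sets, and a finite intersection of absorbing sets is absorbing,
  since a point that eventually stays in each of finitely many sets eventually stays in all.\<close>

lemma uniform_discrete_grid:
  assumes "\<delta> > 0"
  shows "uniform_discrete (grid \<delta> :: (real ^ 'n) set)"
proof (rule uniformI2[OF assms])
  fix x y :: "real ^ 'n"
  assume "x \<in> grid \<delta>" "y \<in> grid \<delta>" "x \<noteq> y"
  then obtain m k :: "int ^ 'n"
    where x: "x = (\<chi> i. \<delta> * of_int (m $ i))" and y: "y = (\<chi> i. \<delta> * of_int (k $ i))"
    unfolding grid_def by blast
  obtain i where "x $ i \<noteq> y $ i"
    using \<open>x \<noteq> y\<close> by (auto simp: vec_eq_iff)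
  then have "m $ i \<noteq> k $ i" using x y by auto
  then have "1 \<le> \<bar>real_of_int (m $ i - k $ i)\<bar>" by linarith
  then have "\<delta> \<le> \<delta> * \<bar>real_of_int (m $ i - k $ i)\<bar>" using assms by simp
  also have "\<dots> = dist (x $ i) (y $ i)"
    using assms by (simp add: x y dist_real_def abs_mult flip: right_diff_distrib)
  also have "\<dots> \<le> dist x y" by (rule dist_vec_nth_le)
  finally show "\<delta> \<le> dist x y" .
qed

lemma finite_bounded_subset_grid:
  fixes C :: "(real ^ 'n) set"
  assumes "\<delta> > 0" "C \<subseteq> grid \<delta>" "bounded C"
  shows "finite C"
  using uniform_discrete_subset[OF uniform_discrete_grid[OF assms(1)] assms(2)] assms(3)
  by (meson uniform_discrete_finite_iff)

lemma absorbing_set_iff_eventually: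
  "absorbing_set w C \<Lambda> \<longleftrightarrow>
     \<Lambda> \<noteq> {} \<and> \<Lambda> \<subseteq> C \<and> (\<forall>x\<in>C. eventually (\<lambda>i. (w ^^ i) x \<in> \<Lambda>) sequentially)"
  by (simp add: absorbing_set_def eventually_sequentially)

lemma absorbing_set_self:
  assumes "C \<noteq> {}" "w ` C \<subseteq> C"
  shows "absorbing_set w C C"
proof -
  have "(w ^^ i) x \<in> C" if "x \<in> C" for x i
    using that assms(2) by (induction i) auto
  then show ?thesis
    using assms(1) by (auto simp: absorbing_set_def)
qed

lemma absorbing_set_Int:
  assumes "absorbing_set w C A" "absorbing_set w C B"
  shows "absorbing_set w C (A \<inter> B)"
proof -
  have absorbs: "\<forall>x\<in>C. eventually (\<lambda>i. (w ^^ i) x \<in> A \<inter> B) sequentially"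
    using assms by (auto simp: absorbing_set_iff_eventually intro: eventually_conj)
  obtain x where "x \<in> C"
    using assms(1) by (auto simp: absorbing_set_def)
  with absorbs obtain N where "\<forall>i\<ge>N. (w ^^ i) x \<in> A \<inter> B"
    by (auto simp: eventually_sequentially)
  then have "A \<inter> B \<noteq> {}" by blast
  with absorbs show ?thesis
    using assms(1) by (auto simp: absorbing_set_iff_eventually)
qed

lemma absorbing_set_Inter:
  assumes "finite F" "F \<noteq> {}" "\<And>\<Lambda>. \<Lambda> \<in> F \<Longrightarrow> absorbing_set w C \<Lambda>"
  shows "absorbing_set w C (\<Inter> F)"
  using assms by (induction F rule: finite_ne_induct) (auto intro: absorbing_set_Int)

lemma absorbing_set_Inter_absorbing_sets:
  assumes "finite C" "C \<noteq> {}" "w ` C \<subseteq> C"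
  shows "absorbing_set w C (\<Inter> {\<Lambda>. absorbing_set w C \<Lambda>})"
proof (rule absorbing_set_Inter)
  show "finite {\<Lambda>. absorbing_set w C \<Lambda>}"
    using assms(1) by (rule finite_subset[rotated, OF finite_Pow_iff[THEN iffD2]])
      (auto simp: absorbing_set_def)
  show "{\<Lambda>. absorbing_set w C \<Lambda>} \<noteq> {}"
    using absorbing_set_self[OF assms(2,3)] by blast
qed simp

theorem theorem3:
  fixes w :: "real ^ 'n \<Rightarrow> real ^ 'n" and C :: "(real ^ 'n) set" and \<delta> :: real
  assumes "\<delta> > 0"
    and "w ` grid \<delta> \<subseteq> grid \<delta>"
    and "C \<subseteq> grid \<delta>" and "C \<noteq> {}" and "bounded C"
    and "w ` C \<subseteq> C"
  shows "absorbing_set w C (\<Inter> {\<Lambda>. absorbing_set w C \<Lambda>})"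
  by (rule absorbing_set_Inter_absorbing_sets[OF finite_bounded_subset_grid[OF assms(1,3,5)] assms(4,6)])

end
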